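(* Let $0<\alpha<\beta<1$ and $\tau=\min(\alpha,1-\beta)$. Let $p^1,\dots,p^m\in[\alpha,\beta]$ and let $v^1,\dots,v^m$ be independent with $v^j\sim D_{p^j}$, where $D_{p}$ denotes a distribution with $\Pr_{v\sim D_p}[v=0]=p$. Set $c^j=1$ if $v^j\neq0$ and $c^j=-1$ if $v^j=0$. Let $a^1,\dots,a^m\in[-1,1]$ be fixed. Then for all $\lambda\ge0$, $$\Pr\left[\sum_{j\in[m]}a^j\phi^{p^j}(c^j)\ge\lambda\right]\le e^{-\lambda^2/4m}+e^{-\sqrt\tau\lambda/4}.$$
   Context: For $p\in(0,1)$, $\phi^p:\{\pm1\}\to\mathbb{R}$ is defined by $\phi^p(1)=-\sqrt{\frac{p}{1-p}}$ and $\phi^p(-1)=\sqrt{\frac{1-p}{p}}$. *)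

theory Defs
  imports "HOL-Probability.Probability"
begin

definition phi :: "real \<Rightarrow> real \<Rightarrow> real" where
  "phi p c = (if c = 1 then - sqrt (p / (1 - p)) else sqrt ((1 - p) / p))"

end

theory Submission
  imports Defs
begin

text \<open>
  The summands are independent two-point variables with mean zero and variance at most one,
  whose values are bounded by \<open>1/\<surd>\<tau>\<close>. For \<open>0 < t \<le> \<surd>\<tau>\<close> the bound
  \<open>e\<^sup>y \<le> 1 + y + y\<^sup>2\<close> on \<open>|y| \<le> 1\<close> therefore gives each summand a moment generating function
  at most \<open>exp (t\<^sup>2)\<close>, and Chernoff's inequality bounds the tail by \<open>exp (- t \<lambda> + m t\<^sup>2)\<close>.
  Taking \<open>t = \<lambda>/2m\<close> when this is admissible yields the Gaussian term, and \<open>t = \<surd>\<tau>\<close>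
  otherwise yields the exponential term.
\<close>

lemma exp_le_one_plus_self_plus_square:
  fixes y :: real
  assumes "\<bar>y\<bar> \<le> 1"
  shows "exp y \<le> 1 + y + y\<^sup>2"
proof (cases "y \<ge> 0")
  case True
  then show ?thesis using assms exp_bound by auto
next
  case False
  define u where "u = - y"
  have u: "0 \<le> u" "u \<le> 1" using False assms by (auto simp: u_def)
  have taylor: "1 + u + u\<^sup>2 / 2 \<le> exp u" using exp_lower_Taylor_quadratic u by auto
  have pos: "0 < 1 + u + u\<^sup>2 / 2" using u by (simp add: add_pos_nonneg)
  have "(1 - u + u\<^sup>2) * (1 + u + u\<^sup>2 / 2) = 1 + u\<^sup>2 / 2 + u ^ 3 / 2 + u ^ 4 / 2"
    by (simp add: field_simps power2_eq_square power3_eq_cube power4_eq_xxxx)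
  then have inverse_le: "1 \<le> (1 - u + u\<^sup>2) * (1 + u + u\<^sup>2 / 2)"
    using u by simp
  have "exp y = 1 / exp u" by (simp add: u_def exp_minus field_simps)
  also have "\<dots> \<le> 1 / (1 + u + u\<^sup>2 / 2)" using taylor pos by (intro divide_left_mono) auto
  also have "\<dots> \<le> 1 - u + u\<^sup>2" using inverse_le pos by (simp add: divide_simps)
  finally show ?thesis by (simp add: u_def)
qed

lemma two_point_mgf_le_exp_square:
  fixes q x y t :: real
  assumes q: "0 \<le> q" "q \<le> 1"
    and mean: "(1 - q) * x + q * y = 0"
    and variance: "(1 - q) * x\<^sup>2 + q * y\<^sup>2 \<le> 1"
    and bounded: "\<bar>t * x\<bar> \<le> 1" "\<bar>t * y\<bar> \<le> 1"
  shows "(1 - q) * exp (t * x) + q * exp (t * y) \<le> exp (t\<^sup>2)"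
proof -
  have "(1 - q) * exp (t * x) + q * exp (t * y)
      \<le> (1 - q) * (1 + t * x + (t * x)\<^sup>2) + q * (1 + t * y + (t * y)\<^sup>2)"
    using q bounded
    by (intro add_mono mult_left_mono exp_le_one_plus_self_plus_square) auto
  also have "\<dots> = 1 + t * ((1 - q) * x + q * y) + t\<^sup>2 * ((1 - q) * x\<^sup>2 + q * y\<^sup>2)"
    by (simp add: algebra_simps power2_eq_square)
  also have "\<dots> \<le> 1 + t\<^sup>2"
    using mean variance mult_left_mono[OF variance, of "t\<^sup>2"] by simp
  also have "\<dots> \<le> exp (t\<^sup>2)" by (rule exp_ge_add_one_self)
  finally show ?thesis .
qed

lemma phi_one_squared: "0 < p \<Longrightarrow> p < 1 \<Longrightarrow> (phi p 1)\<^sup>2 = p / (1 - p)"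
  by (simp add: phi_def)

lemma phi_minus_one_squared: "0 < p \<Longrightarrow> p < 1 \<Longrightarrow> (phi p (-1))\<^sup>2 = (1 - p) / p"
  by (simp add: phi_def)

lemma phi_mean_zero:
  assumes "0 < p" "p < 1"
  shows "(1 - p) * phi p 1 + p * phi p (-1) = 0"
proof -
  have "p * sqrt ((1 - p) / p) = sqrt (p\<^sup>2 * ((1 - p) / p))"
    using assms by (subst real_sqrt_mult) simp
  also have "p\<^sup>2 * ((1 - p) / p) = (1 - p)\<^sup>2 * (p / (1 - p))"
    using assms by (simp add: power2_eq_square)
  also have "sqrt \<dots> = (1 - p) * sqrt (p / (1 - p))"
    using assms by (subst real_sqrt_mult) simp
  finally show ?thesis by (simp add: phi_def)
qed

lemma phi_variance_one:
  assumes "0 < p" "p < 1"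
  shows "(1 - p) * (phi p 1)\<^sup>2 + p * (phi p (-1))\<^sup>2 = 1"
  using assms by (simp add: phi_one_squared phi_minus_one_squared field_simps)

lemma phi_mgf_le_exp_square:
  fixes p a t :: real
  assumes p: "0 < p" "p < 1" and a: "\<bar>a\<bar> \<le> 1" and t: "t\<^sup>2 \<le> min p (1 - p)"
  shows "(1 - p) * exp (t * (a * phi p 1)) + p * exp (t * (a * phi p (-1))) \<le> exp (t\<^sup>2)"
proof (rule two_point_mgf_le_exp_square)
  have a2: "a\<^sup>2 \<le> 1" using a by (simp add: abs_square_le_1)
  have "(t * (a * phi p 1))\<^sup>2 = a\<^sup>2 * (t\<^sup>2 * (p / (1 - p)))"
    using p by (simp add: power_mult_distrib phi_one_squared)
  also have "\<dots> \<le> 1 * ((1 - p) * (p / (1 - p)))"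
    using a2 t p by (intro mult_mono) auto
  also have "\<dots> \<le> 1" using p by simp
  finally show "\<bar>t * (a * phi p 1)\<bar> \<le> 1" by (simp add: abs_square_le_1)
  have "(t * (a * phi p (-1)))\<^sup>2 = a\<^sup>2 * (t\<^sup>2 * ((1 - p) / p))"
    using p by (simp add: power_mult_distrib phi_minus_one_squared)
  also have "\<dots> \<le> 1 * (p * ((1 - p) / p))"
    using a2 t p by (intro mult_mono) auto
  also have "\<dots> \<le> 1" using p by simp
  finally show "\<bar>t * (a * phi p (-1))\<bar> \<le> 1" by (simp add: abs_square_le_1)
  have "(1 - p) * (a * phi p 1) + p * (a * phi p (-1)) = a * ((1 - p) * phi p 1 + p * phi p (-1))"
    by (simp add: algebra_simps)
  then show "(1 - p) * (a * phi p 1) + p * (a * phi p (-1)) = 0"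
    using phi_mean_zero[OF p] by simp
  have "(1 - p) * (a * phi p 1)\<^sup>2 + p * (a * phi p (-1))\<^sup>2
      = a\<^sup>2 * ((1 - p) * (phi p 1)\<^sup>2 + p * (phi p (-1))\<^sup>2)"
    by (simp add: algebra_simps)
  then have "(1 - p) * (a * phi p 1)\<^sup>2 + p * (a * phi p (-1))\<^sup>2 = a\<^sup>2"
    using phi_variance_one[OF p] by simp
  then show "(1 - p) * (a * phi p 1)\<^sup>2 + p * (a * phi p (-1))\<^sup>2 \<le> 1"
    using a2 by simp
qed (use p in auto)

lemma (in prob_space) nn_integral_sign_of_zero_event:
  fixes V :: "'a \<Rightarrow> real" and f :: "real \<Rightarrow> real"
  assumes [measurable]: "V \<in> borel_measurable M"
    and nonneg: "0 \<le> f 1" "0 \<le> f (-1)"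
  shows "(\<integral>\<^sup>+x. ennreal (f (if V x \<noteq> 0 then 1 else -1)) \<partial>M)
       = ennreal ((1 - prob {x\<in>space M. V x = 0}) * f 1 + prob {x\<in>space M. V x = 0} * f (-1))"
proof -
  define A where "A = {x\<in>space M. V x = 0}"
  have A[measurable]: "A \<in> sets M" unfolding A_def by measurable
  have "(\<integral>\<^sup>+x. ennreal (f (if V x \<noteq> 0 then 1 else -1)) \<partial>M)
      = (\<integral>\<^sup>+x. ennreal (f (-1)) * indicator A x + ennreal (f 1) * indicator (space M - A) x \<partial>M)"
    by (intro nn_integral_cong) (auto simp: A_def indicator_def)
  also have "\<dots> = ennreal (f (-1)) * emeasure M A + ennreal (f 1) * emeasure M (space M - A)"
    by (simp add: nn_integral_add nn_integral_cmult_indicator)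
  also have "\<dots> = ennreal (f (-1)) * ennreal (prob A) + ennreal (f 1) * ennreal (1 - prob A)"
    using prob_compl[OF A] by (simp add: emeasure_eq_measure)
  also have "\<dots> = ennreal ((1 - prob A) * f 1 + prob A * f (-1))"
    using nonneg by (simp add: ennreal_mult' ennreal_plus[symmetric] mult.commute)
  finally show ?thesis by (simp add: A_def)
qed

lemma (in prob_space) nn_integral_exp_phi_sign_le:
  fixes V :: "'a \<Rightarrow> real"
  assumes "V \<in> borel_measurable M" and "prob {x\<in>space M. V x = 0} = p"
    and "0 < p" "p < 1" "\<bar>a\<bar> \<le> 1" "t\<^sup>2 \<le> min p (1 - p)"
  shows "(\<integral>\<^sup>+x. ennreal (exp (t * (a * phi p (if V x \<noteq> 0 then 1 else -1)))) \<partial>M)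
       \<le> ennreal (exp (t\<^sup>2))"
  using nn_integral_sign_of_zero_event[OF assms(1), of "\<lambda>c. exp (t * (a * phi p c))"]
    phi_mgf_le_exp_square[OF assms(3-6)] assms(2)
  by (simp add: ennreal_leI)

lemma (in prob_space) chernoff_bound_indep_sum:
  fixes X :: "'i \<Rightarrow> 'a \<Rightarrow> real"
  assumes fin: "finite I" and indep: "indep_vars (\<lambda>_. borel) X I" and t: "t > 0"
    and mgf: "\<And>i. i \<in> I \<Longrightarrow> (\<integral>\<^sup>+x. ennreal (exp (t * X i x)) \<partial>M) \<le> ennreal (exp (t\<^sup>2))"
  shows "prob {x\<in>space M. (\<Sum>i\<in>I. X i x) \<ge> lam} \<le> exp (- t * lam + real (card I) * t\<^sup>2)"
proof -
  have [measurable]: "\<And>i. i \<in> I \<Longrightarrow> X i \<in> borel_measurable M"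
    using indep unfolding indep_vars_def by blast
  have "ennreal (prob {x\<in>space M. (\<Sum>i\<in>I. X i x) \<ge> lam})
      = emeasure M {x\<in>space M. (\<Sum>i\<in>I. X i x) \<ge> lam}"
    by (simp add: emeasure_eq_measure)
  also have "\<dots> \<le> ennreal (exp (- t * lam))
      * (\<integral>\<^sup>+x. ennreal (exp (t * (\<Sum>i\<in>I. X i x))) * indicator (space M) x \<partial>M)"
    by (intro Chernoff_ineq_nn_integral_ge t) measurable
  also have "(\<integral>\<^sup>+x. ennreal (exp (t * (\<Sum>i\<in>I. X i x))) * indicator (space M) x \<partial>M)
      = (\<integral>\<^sup>+x. (\<Prod>i\<in>I. ennreal (exp (t * X i x))) \<partial>M)"
    by (intro nn_integral_cong) (simp_all add: sum_distrib_left exp_sum fin prod_ennreal)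
  also have "\<dots> = (\<Prod>i\<in>I. \<integral>\<^sup>+x. ennreal (exp (t * X i x)) \<partial>M)"
    by (intro indep_vars_nn_integral fin indep_vars_compose2[OF indep]) auto
  also have "ennreal (exp (- t * lam)) * \<dots> \<le> ennreal (exp (- t * lam)) * (\<Prod>i\<in>I. ennreal (exp (t\<^sup>2)))"
    by (intro mult_left_mono prod_mono_ennreal mgf) auto
  also have "\<dots> = ennreal (exp (- t * lam) * exp (t\<^sup>2) ^ card I)"
    by (simp add: prod_ennreal ennreal_power flip: ennreal_mult)
  also have "exp (- t * lam) * exp (t\<^sup>2) ^ card I = exp (- t * lam + real (card I) * t\<^sup>2)"
    by (simp only: exp_add exp_of_nat_mult)
  finally show ?thesis
    by (subst (asm) ennreal_le_iff) simp_all
qed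

lemma subgaussian_tail_le_two_regimes:
  fixes P s lam :: real and m :: nat
  assumes s: "0 < s" and lam: "0 \<le> lam" and P_le_one: "P \<le> 1"
    and chernoff: "\<And>t. 0 < t \<Longrightarrow> t \<le> s \<Longrightarrow> P \<le> exp (- t * lam + real m * t\<^sup>2)"
  shows "P \<le> exp (- lam\<^sup>2 / (4 * real m)) + exp (- s * lam / 4)"
proof -
  consider "lam = 0" | "m > 0" "lam / (2 * real m) \<le> s" "lam > 0"
    | "2 * real m * s \<le> lam" "lam > 0"
    using lam by (cases "lam = 0"; cases "m = 0"; cases "lam / (2 * real m) \<le> s") (auto simp: field_simps)
  then show ?thesis
  proof cases
    case 1
    then show ?thesis using P_le_one by (simp add: add_increasing2)
  next
    case 2
    define t where "t = lam / (2 * real m)"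
    have "P \<le> exp (- t * lam + real m * t\<^sup>2)"
      using 2 by (intro chernoff) (auto simp: t_def)
    also have "- t * lam + real m * t\<^sup>2 = - lam\<^sup>2 / (4 * real m)"
      using 2 by (simp add: t_def field_simps power2_eq_square)
    finally show ?thesis by (simp add: add_increasing2)
  next
    case 3
    have "real m * s\<^sup>2 \<le> s * lam / 2"
      using 3 s mult_left_mono[OF 3(1), of s] by (simp add: power2_eq_square algebra_simps)
    moreover have "0 < s * lam" using s 3 by simp
    ultimately have "- s * lam + real m * s\<^sup>2 \<le> - s * lam / 4" by linarith
    then have "P \<le> exp (- s * lam / 4)"
      using chernoff[OF s order_refl] by (meson exp_le_cancel_iff order_trans)
    then show ?thesis by (simp add: add_increasing)
  qed
qed

theorem mainTheorem10:
  fixes M :: "'a measure" and v :: "nat \<Rightarrow> 'a \<Rightarrow> real"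
    and p a :: "nat \<Rightarrow> real" and m :: nat and \<alpha> \<beta> \<tau> lam :: real
  assumes "prob_space M"
    and "0 < \<alpha>" "\<alpha> < \<beta>" "\<beta> < 1"
    and "\<tau> = min \<alpha> (1 - \<beta>)"
    and "\<forall>j\<in>{1..m}. p j \<in> {\<alpha>..\<beta>}"
    and "prob_space.indep_vars M (\<lambda>_. borel) v {1..m}"
    and "\<forall>j\<in>{1..m}. measure M {x \<in> space M. v j x = 0} = p j"
    and "\<forall>j\<in>{1..m}. a j \<in> {-1..1}"
    and "lam \<ge> 0"
  shows "measure M {x \<in> space M.
           (\<Sum>j\<in>{1..m}. a j * phi (p j) (if v j x \<noteq> 0 then 1 else -1)) \<ge> lam}
         \<le> exp (- lam\<^sup>2 / (4 * real m)) + exp (- sqrt \<tau> * lam / 4)"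
proof -
  have "0 < \<tau>" using assms(2-5) by simp
  have \<tau>_le: "\<tau> \<le> min (p j) (1 - p j)" if "j \<in> {1..m}" for j
  proof -
    have "\<alpha> \<le> p j" "p j \<le> \<beta>" using assms(6) that by auto
    then show ?thesis using assms(5) by auto
  qed
  interpret prob_space M by (rule assms(1))
  have v: "v j \<in> borel_measurable M" if "j \<in> {1..m}" for j
    using assms(7) that unfolding indep_vars_def by blast
  define X where "X j x = a j * phi (p j) (if v j x \<noteq> 0 then 1 else -1)" for j x
  have indep: "indep_vars (\<lambda>_. borel) X {1..m}"
    unfolding X_def using assms(7)
    by (rule indep_vars_compose2[where Y = "\<lambda>j y. a j * phi (p j) (if y \<noteq> 0 then 1 else -1)"])
       (unfold phi_def, measurable)
  have chernoff: "prob {x\<in>space M. lam \<le> (\<Sum>j\<in>{1..m}. X j x)} \<le> exp (- t * lam + real m * t\<^sup>2)"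
    if t: "0 < t" "t \<le> sqrt \<tau>" for t
  proof -
    have "t\<^sup>2 \<le> (sqrt \<tau>)\<^sup>2" using t by (intro power_mono) auto
    then have "t\<^sup>2 \<le> \<tau>" using \<open>0 < \<tau>\<close> by simp
    then have "(\<integral>\<^sup>+x. ennreal (exp (t * X j x)) \<partial>M) \<le> ennreal (exp (t\<^sup>2))" if j: "j \<in> {1..m}" for j
      unfolding X_def using j assms(8,9) \<open>0 < \<tau>\<close> \<tau>_le[OF j]
      by (intro nn_integral_exp_phi_sign_le[OF v[OF j]]) (auto simp: abs_le_iff)
    then show ?thesis using chernoff_bound_indep_sum[OF _ indep t(1)] by simp
  qed
  have "0 < sqrt \<tau>" using \<open>0 < \<tau>\<close> by simp
  from subgaussian_tail_le_two_regimes[OF this assms(10) _ chernoff]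
  show ?thesis by (simp add: X_def)
qed

end
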